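(* Let $G$ be a graph with at least one edge and let $x$ be a non-isolated vertex of $G$. Then there exists a Z-Grundy dominating sequence of $G$ that contains $x$.
   Context: For a graph $G$, $N(v)$ is the open neighborhood and $N[v]=N(v)\cup\{v\}$ the closed neighborhood of $v$. A sequence $(v_1,\ldots,v_k)$ of distinct vertices is a Z-sequence if $N(v_i)\setminus\bigcup_{j=1}^{i-1}N[v_j]\neq\emptyset$ for each $i\in[k]$. A Z-Grundy dominating sequence is a Z-sequence of maximum possible length in $G$. *)

theory Defs
  imports Main
begin

definition graph :: "'a set \<Rightarrow> ('a \<Rightarrow> 'a \<Rightarrow> bool) \<Rightarrow> bool" where
  "graph V E \<longleftrightarrow> finite V \<and> (\<forall>u v. E u v \<longrightarrow> u \<in> V \<and> v \<in> V)
     \<and> (\<forall>u v. E u v \<longrightarrow> E v u) \<and> (\<forall>v. \<not> E v v)"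

definition open_nbh :: "'a set \<Rightarrow> ('a \<Rightarrow> 'a \<Rightarrow> bool) \<Rightarrow> 'a \<Rightarrow> 'a set" where
  "open_nbh V E v = {u \<in> V. E v u}"

definition closed_nbh :: "'a set \<Rightarrow> ('a \<Rightarrow> 'a \<Rightarrow> bool) \<Rightarrow> 'a \<Rightarrow> 'a set" where
  "closed_nbh V E v = insert v (open_nbh V E v)"

text \<open>Z-sequence (v_1,...,v_k) as a list; index i < length s corresponds to v_(i+1).\<close>
definition is_Z_sequence :: "'a set \<Rightarrow> ('a \<Rightarrow> 'a \<Rightarrow> bool) \<Rightarrow> 'a list \<Rightarrow> bool" where
  "is_Z_sequence V E s \<longleftrightarrow> distinct s \<and> set s \<subseteq> V \<and>
     (\<forall>i < length s. open_nbh V E (s ! i) - (\<Union>j<i. closed_nbh V E (s ! j)) \<noteq> {})"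

definition is_Z_Grundy_dom_seq :: "'a set \<Rightarrow> ('a \<Rightarrow> 'a \<Rightarrow> bool) \<Rightarrow> 'a list \<Rightarrow> bool" where
  "is_Z_Grundy_dom_seq V E s \<longleftrightarrow> is_Z_sequence V E s \<and>
     (\<forall>t. is_Z_sequence V E t \<longrightarrow> length t \<le> length s)"

end

theory Submission
  imports Defs
begin

text \<open>A Z-sequence \<open>s\<close> comes with footprints: for each \<open>i\<close> a vertex \<open>u\<^sub>i\<close> of
\<open>N(s\<^sub>i)\<close> that lies in no \<open>N[s\<^sub>j]\<close> with \<open>j < i\<close>. As the relation "\<open>u\<^sub>j \<notin> N[s\<^sub>i]\<close>
for \<open>i < j\<close>" is symmetric in the two sequences, the reversed footprints form a Z-sequence
of the same length whose footprints are the reversed \<open>s\<close>. Now let \<open>s\<close> be a Z-Grundy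
dominating sequence and \<open>x\<close> a non-isolated vertex missing from it. If \<open>x\<close> is a
footprint, reverse. Otherwise the closed neighbourhoods of \<open>s\<close> cover \<open>N(x)\<close> (else \<open>x\<close>
could be appended), and replacing by \<open>x\<close> the first \<open>s\<^sub>t\<close> whose closed neighbourhood
completes this cover yields a Z-sequence of the same length: \<open>x\<close> footprints a vertex of
\<open>N(x)\<close> not dominated before step \<open>t\<close>, and the later footprints avoid \<open>N[x]\<close>.\<close>

definition Z_footprints :: "'a set \<Rightarrow> ('a \<Rightarrow> 'a \<Rightarrow> bool) \<Rightarrow> 'a list \<Rightarrow> 'a list \<Rightarrow> bool" where
  "Z_footprints V E s fs \<longleftrightarrow> length fs = length s \<and>
     (\<forall>i<length s. fs ! i \<in> open_nbh V E (s ! i) \<and>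
        (\<forall>j<i. fs ! i \<notin> closed_nbh V E (s ! j)))"

lemma is_Z_sequence_iff_footprints:
  "is_Z_sequence V E s \<longleftrightarrow> distinct s \<and> set s \<subseteq> V \<and> (\<exists>fs. Z_footprints V E s fs)"
proof
  assume Z: "is_Z_sequence V E s"
  then have "\<forall>i<length s. \<exists>u. u \<in> open_nbh V E (s ! i) - (\<Union>j<i. closed_nbh V E (s ! j))"
    unfolding is_Z_sequence_def by blast
  then obtain f where "\<forall>i<length s. f i \<in> open_nbh V E (s ! i) - (\<Union>j<i. closed_nbh V E (s ! j))"
    by metis
  then have "Z_footprints V E s (map f [0..<length s])"
    unfolding Z_footprints_def by auto
  with Z show "distinct s \<and> set s \<subseteq> V \<and> (\<exists>fs. Z_footprints V E s fs)"
    unfolding is_Z_sequence_def by blast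
next
  assume "distinct s \<and> set s \<subseteq> V \<and> (\<exists>fs. Z_footprints V E s fs)"
  then show "is_Z_sequence V E s"
    unfolding is_Z_sequence_def Z_footprints_def by blast
qed

lemma Z_footprints_distinct:
  assumes "Z_footprints V E s fs"
  shows "distinct fs"
proof -
  have "fs ! i \<noteq> fs ! j" if "i < j" "j < length fs" for i j
  proof -
    have "fs ! i \<in> closed_nbh V E (s ! i)"
      using assms that unfolding Z_footprints_def closed_nbh_def by auto
    moreover have "fs ! j \<notin> closed_nbh V E (s ! i)"
      using assms that unfolding Z_footprints_def by auto
    ultimately show ?thesis by auto
  qed
  then show ?thesis
    unfolding distinct_conv_nth by (metis linorder_neqE_nat)
qed

lemma Z_footprints_subset:
  assumes "Z_footprints V E s fs"
  shows "set fs \<subseteq> V"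
  using assms unfolding Z_footprints_def open_nbh_def by (auto simp: in_set_conv_nth)

lemma Z_footprints_rev:
  assumes G: "graph V E" and fs: "Z_footprints V E s fs" and sV: "set s \<subseteq> V"
  shows "Z_footprints V E (rev fs) (rev s)"
  unfolding Z_footprints_def
proof (intro conjI allI impI)
  let ?k = "length s"
  have len: "length fs = ?k"
    using fs unfolding Z_footprints_def by simp
  then show "length (rev s) = length (rev fs)" by simp
  have fsV: "set fs \<subseteq> V"
    using fs by (rule Z_footprints_subset)
  fix m assume m: "m < length (rev fs)"
  then have m': "?k - 1 - m < ?k" using len by simp
  have "fs ! (?k - 1 - m) \<in> open_nbh V E (s ! (?k - 1 - m))"
    using fs m' unfolding Z_footprints_def by blast
  moreover have "s ! (?k - 1 - m) \<in> V"
    using sV m' by auto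
  ultimately show "rev s ! m \<in> open_nbh V E (rev fs ! m)"
    using G m len unfolding open_nbh_def graph_def by (auto simp: rev_nth)
  fix j assume j: "j < m"
  then have "?k - 1 - j < ?k" "?k - 1 - m < ?k - 1 - j"
    using m len by auto
  then have "fs ! (?k - 1 - j) \<notin> closed_nbh V E (s ! (?k - 1 - m))"
    using fs unfolding Z_footprints_def by blast
  moreover have "fs ! (?k - 1 - j) \<in> V"
    using fsV j m len by auto
  ultimately show "rev s ! m \<notin> closed_nbh V E (rev fs ! j)"
    using G j m len unfolding closed_nbh_def open_nbh_def graph_def by (auto simp: rev_nth)
qed

lemma Z_footprints_snoc:
  assumes fs: "Z_footprints V E s fs" and u: "u \<in> open_nbh V E x"
    and new: "\<forall>j<length s. u \<notin> closed_nbh V E (s ! j)"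
  shows "Z_footprints V E (s @ [x]) (fs @ [u])"
proof -
  have "length fs = length s"
    using fs unfolding Z_footprints_def by simp
  then show ?thesis
    using assms unfolding Z_footprints_def
    by (auto simp: nth_append less_Suc_eq)
qed

lemma Z_footprints_update:
  assumes fs: "Z_footprints V E s fs" and t: "t < length s"
    and u: "u \<in> open_nbh V E x" and new: "\<forall>j<t. u \<notin> closed_nbh V E (s ! j)"
    and x_fs: "x \<notin> set fs"
    and covered: "open_nbh V E x \<subseteq> (\<Union>j\<le>t. closed_nbh V E (s ! j))"
  shows "Z_footprints V E (s[t := x]) (fs[t := u])"
  unfolding Z_footprints_def
proof (intro conjI allI impI)
  have len: "length fs = length s"
    using fs unfolding Z_footprints_def by simp
  then show "length (fs[t := u]) = length (s[t := x])" by simp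
  fix i assume i: "i < length (s[t := x])"
  show "fs[t := u] ! i \<in> open_nbh V E (s[t := x] ! i)"
    using fs i u len unfolding Z_footprints_def by (cases "i = t") auto
  fix j assume j: "j < i"
  show "fs[t := u] ! i \<notin> closed_nbh V E (s[t := x] ! j)"
  proof (cases "i = t")
    case True
    then show ?thesis using new j t len by simp
  next
    case False
    have old: "\<forall>j'<i. fs ! i \<notin> closed_nbh V E (s ! j')"
      using fs i unfolding Z_footprints_def by auto
    have "fs ! i \<notin> closed_nbh V E x" if "j = t"
    proof -
      have "fs ! i \<noteq> x" using x_fs i len by auto
      moreover have "fs ! i \<notin> open_nbh V E x"
        using covered old j that by fastforce
      ultimately show ?thesis unfolding closed_nbh_def by simp
    qed
    then show ?thesis
      using False old j t by (cases "j = t") auto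
  qed
qed

lemma Z_sequence_length_le_card:
  assumes "finite V" and "is_Z_sequence V E s"
  shows "length s \<le> card V"
proof -
  have "distinct s" "set s \<subseteq> V"
    using assms(2) unfolding is_Z_sequence_def by auto
  then show ?thesis
    using assms(1) by (metis card_mono distinct_card)
qed

lemma ex_Z_Grundy_dom_seq:
  assumes "finite V"
  shows "\<exists>s. is_Z_Grundy_dom_seq V E s"
proof -
  have "is_Z_sequence V E []"
    unfolding is_Z_sequence_def by simp
  moreover have "\<forall>s. is_Z_sequence V E s \<longrightarrow> length s < Suc (card V)"
    using Z_sequence_length_le_card[OF assms] by (simp add: le_imp_less_Suc)
  ultimately show ?thesis
    unfolding is_Z_Grundy_dom_seq_def by (rule ex_has_greatest_nat)
qed

lemma Z_sequence_exchange:
  assumes xV: "x \<in> V" and x_nonisol: "open_nbh V E x \<noteq> {}"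
    and Z: "is_Z_sequence V E s" and fs: "Z_footprints V E s fs"
    and x_s: "x \<notin> set s" and x_fs: "x \<notin> set fs"
  shows "\<exists>s'. is_Z_sequence V E s' \<and> length s \<le> length s' \<and> x \<in> set s'"
proof -
  define D where "D n = (\<Union>j<n. closed_nbh V E (s ! j))" for n
  have s_distinct: "distinct s" and sV: "set s \<subseteq> V"
    using Z unfolding is_Z_sequence_def by auto
  show ?thesis
  proof (cases "open_nbh V E x \<subseteq> D (length s)")
    case False
    then obtain u where "u \<in> open_nbh V E x" "\<forall>j<length s. u \<notin> closed_nbh V E (s ! j)"
      unfolding D_def by blast
    then have "Z_footprints V E (s @ [x]) (fs @ [u])"
      using fs by (rule Z_footprints_snoc[rotated])
    then have "is_Z_sequence V E (s @ [x])"
      using s_distinct sV xV x_s by (simp add: is_Z_sequence_iff_footprints, blast)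
    then show ?thesis by auto
  next
    case True
    define n where "n = (LEAST n. open_nbh V E x \<subseteq> D n)"
    have covered_n: "open_nbh V E x \<subseteq> D n"
      unfolding n_def using True by (rule LeastI)
    have "n \<le> length s"
      unfolding n_def using True by (rule Least_le)
    moreover have "n \<noteq> 0"
      using covered_n x_nonisol unfolding D_def by auto
    then obtain t where n: "n = Suc t" by (metis not0_implies_Suc)
    ultimately have t: "t < length s" by simp
    have "\<not> open_nbh V E x \<subseteq> D t"
      using not_less_Least[of t "\<lambda>n. open_nbh V E x \<subseteq> D n"] n unfolding n_def by simp
    then obtain u where "u \<in> open_nbh V E x" "\<forall>j<t. u \<notin> closed_nbh V E (s ! j)"
      unfolding D_def by blast
    moreover have "open_nbh V E x \<subseteq> (\<Union>j\<le>t. closed_nbh V E (s ! j))"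
      using covered_n n unfolding D_def by (simp add: lessThan_Suc_atMost)
    ultimately have "Z_footprints V E (s[t := x]) (fs[t := u])"
      using Z_footprints_update[OF fs t _ _ x_fs] by blast
    moreover have "distinct (s[t := x])"
      using s_distinct x_s by (simp add: distinct_list_update)
    moreover have "set (s[t := x]) \<subseteq> V"
      using sV xV set_update_subset_insert by fastforce
    ultimately have "is_Z_sequence V E (s[t := x])"
      by (simp add: is_Z_sequence_iff_footprints, blast)
    moreover have "x \<in> set (s[t := x])"
      using t by (simp add: set_update_memI)
    ultimately show ?thesis by auto
  qed
qed

lemma ex_Z_sequence_containing:
  assumes G: "graph V E" and xV: "x \<in> V" and x_nonisol: "open_nbh V E x \<noteq> {}"
    and Z: "is_Z_sequence V E s"
  shows "\<exists>s'. is_Z_sequence V E s' \<and> length s \<le> length s' \<and> x \<in> set s'"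
proof -
  obtain fs where fs: "Z_footprints V E s fs"
    using Z by (auto simp: is_Z_sequence_iff_footprints)
  consider "x \<in> set s" | "x \<in> set fs" | "x \<notin> set s" "x \<notin> set fs" by blast
  then show ?thesis
  proof cases
    case 1
    then show ?thesis using Z by blast
  next
    case 2
    have "set s \<subseteq> V" using Z unfolding is_Z_sequence_def by simp
    then have "is_Z_sequence V E (rev fs)"
      using Z_footprints_rev[OF G fs] Z_footprints_distinct[OF fs] Z_footprints_subset[OF fs]
      by (auto simp: is_Z_sequence_iff_footprints)
    moreover have "length fs = length s"
      using fs unfolding Z_footprints_def by simp
    ultimately show ?thesis using 2 by auto
  next
    case 3
    then show ?thesis using Z_sequence_exchange[OF xV x_nonisol Z fs] by blast
  qed
qed

theorem proposition3p1:
  fixes V :: "'a set" and E :: "'a \<Rightarrow> 'a \<Rightarrow> bool" and x :: 'a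
  assumes "graph V E"
    and "\<exists>u v. E u v"
    and "x \<in> V" and "open_nbh V E x \<noteq> {}"
  shows "\<exists>s. is_Z_Grundy_dom_seq V E s \<and> x \<in> set s"
proof -
  obtain s where s: "is_Z_Grundy_dom_seq V E s"
    using ex_Z_Grundy_dom_seq assms(1) unfolding graph_def by blast
  then obtain s' where "is_Z_sequence V E s'" "length s \<le> length s'" "x \<in> set s'"
    using ex_Z_sequence_containing[OF assms(1,3,4)] unfolding is_Z_Grundy_dom_seq_def by blast
  with s show ?thesis
    unfolding is_Z_Grundy_dom_seq_def by (meson order_trans)
qed

end
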